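(* Let $A[1:n]$ be an array of $n$ items drawn from the universe $U=\{0,\dots,u-1\}$. For every fixed $\epsilon \in [0,1/2]$ there exists a static data structure using $O(n^{2-2\epsilon})$ words of storage that, given any query indices $1 \le i \le j \le n$, returns a mode of the multiset $\{A[i],A[i+1],\dots,A[j]\}$ in $O(n^{\epsilon})$ time in the worst case.
   Context: Model: word RAM with word size $\Theta(\log u)$, where elements are drawn from $U=\{0,\dots,u-1\}$. The frequency of an element $x$ in a multiset $S$ is its multiplicity in $S$. A mode of a multiset $S$ is an element $a\in S$ such that $\operatorname{freq}_S(x)\le \operatorname{freq}_S(a)$ for all $x\in S$. $A[i:j]$ denotes the subarray $A[i],\dots,A[j]$, regarded as a multiset for the purpose of computing modes. *)

theory Defs
  imports Complex_Main "HOL-Library.Multiset"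
begin

definition subarray :: "nat list \<Rightarrow> nat \<Rightarrow> nat \<Rightarrow> nat multiset" where
  "subarray A i j = mset (take (Suc j - i) (drop (i - 1) A))"

definition is_mode :: "nat multiset \<Rightarrow> nat \<Rightarrow> bool" where
  "is_mode S a \<longleftrightarrow> a \<in># S \<and> (\<forall>x \<in># S. count S x \<le> count S a)"

definition nbits :: "nat \<Rightarrow> nat" where
  "nbits x = (LEAST k. x < 2 ^ k)"

text \<open>Word size for an instance with n items from universe {0..u-1}:
  Theta(log u) (for u >= n), large enough to address O(n^2) cells.\<close>
definition wordsize :: "nat \<Rightarrow> nat \<Rightarrow> nat" where
  "wordsize n u = 3 * nbits (n + u)"

text \<open>Instructions; registers are named by naturals, jump targets are program indices.\<close>
datatype instr =
    Const nat nat
  | Add nat nat nat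
  | Sub nat nat nat          \<comment> \<open>r := a - b (truncated at 0)\<close>
  | Mul nat nat nat
  | Div nat nat nat          \<comment> \<open>r := a div b (0 if b = 0)\<close>
  | Mod nat nat nat
  | AndI nat nat nat
  | OrI nat nat nat
  | XorI nat nat nat
  | Shl nat nat nat
  | Shr nat nat nat
  | Less nat nat nat
  | Load nat nat
  | Store nat nat
  | Jz nat nat
  | Jmp nat
  | Halt

record state =
  pc :: nat
  regs :: "nat \<Rightarrow> nat"
  mem :: "nat \<Rightarrow> nat"

definition halted :: "instr list \<Rightarrow> state \<Rightarrow> bool" where
  "halted P s \<longleftrightarrow> pc s \<ge> length P \<or> P ! pc s = Halt"

definition setr :: "state \<Rightarrow> nat \<Rightarrow> nat \<Rightarrow> state" where
  "setr s r v = s\<lparr>pc := Suc (pc s), regs := (regs s)(r := v)\<rparr>"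

fun exec_instr :: "nat \<Rightarrow> instr \<Rightarrow> state \<Rightarrow> state" where
  "exec_instr w (Const r k) s = setr s r (k mod 2^w)"
| "exec_instr w (Add r a b) s = setr s r ((regs s a + regs s b) mod 2^w)"
| "exec_instr w (Sub r a b) s = setr s r (regs s a - regs s b)"
| "exec_instr w (Mul r a b) s = setr s r ((regs s a * regs s b) mod 2^w)"
| "exec_instr w (Div r a b) s = setr s r (regs s a div regs s b)"
| "exec_instr w (Mod r a b) s = setr s r (regs s a mod regs s b)"
| "exec_instr w (AndI r a b) s = setr s r (and (regs s a) (regs s b))"
| "exec_instr w (OrI r a b) s = setr s r (or (regs s a) (regs s b))"
| "exec_instr w (XorI r a b) s = setr s r (xor (regs s a) (regs s b))"
| "exec_instr w (Shl r a b) s = setr s r ((regs s a * 2 ^ regs s b) mod 2^w)"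
| "exec_instr w (Shr r a b) s = setr s r (regs s a div 2 ^ regs s b)"
| "exec_instr w (Less r a b) s = setr s r (if regs s a < regs s b then 1 else 0)"
| "exec_instr w (Load r a) s = setr s r (mem s (regs s a) mod 2^w)"
| "exec_instr w (Store a r) s =
     s\<lparr>pc := Suc (pc s), mem := (mem s)(regs s a := regs s r)\<rparr>"
| "exec_instr w (Jz r l) s = (if regs s r = 0 then s\<lparr>pc := l\<rparr> else s\<lparr>pc := Suc (pc s)\<rparr>)"
| "exec_instr w (Jmp l) s = s\<lparr>pc := l\<rparr>"
| "exec_instr w Halt s = s"

definition step :: "nat \<Rightarrow> instr list \<Rightarrow> state \<Rightarrow> state" where
  "step w P s = (if halted P s then s else exec_instr w (P ! pc s) s)"

definition run :: "nat \<Rightarrow> instr list \<Rightarrow> nat \<Rightarrow> state \<Rightarrow> state" where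
  "run w P t s = (step w P ^^ t) s"

definition query_init :: "(nat \<Rightarrow> nat) \<Rightarrow> nat \<Rightarrow> nat \<Rightarrow> state" where
  "query_init M i j = \<lparr>pc = 0, regs = (\<lambda>_. 0)(0 := i, 1 := j), mem = M\<rparr>"

end

theory Submission
  imports Defs
begin

text \<open>
  Positions are 0-based, so A[i:j] is the range [i - 1, j).
  Cut A into blocks of length t = ceil(n^e).  A query range [lo, hi) splits into a prefix
  [lo, pe) and a suffix [se, hi), both shorter than t, and a span [pe, se) of whole blocks.
  For each of the O((n/t)^2) block spans a mode and its frequency are stored; this pair is
  the initial candidate (c, f).  The mode of the range is either c or a value occurring in
  the prefix or suffix, and each prefix or suffix position k is examined by asking whether
  A!k occurs more than f times in [k, hi).  With all positions listed in the order sorted by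
  value (stably), this is a single comparison: the entry f places after k must still carry
  the value A!k and lie before hi.  A positive answer raises f by one; since the final f
  exceeds the stored frequency by at most the prefix and suffix lengths, a query makes O(t)
  comparisons.  Suffix positions are handled by the same loop run on the reversed array.
\<close>

section \<open>Occurrence counts and the value-sorted order\<close>

definition occ :: "nat list \<Rightarrow> nat \<Rightarrow> nat \<Rightarrow> nat \<Rightarrow> nat" where
  "occ B x l h = card {q. l \<le> q \<and> q < h \<and> B!q = x}"

definition smaller :: "nat list \<Rightarrow> nat \<Rightarrow> nat" where
  "smaller B x = card {q. q < length B \<and> B!q < x}"

text \<open>Index of position k in the list of all positions sorted by value, ties broken by
  position; the class of value B!k ends just before class_end B k.  sorted_at inverts
  sorted_pos.\<close>
definition sorted_pos :: "nat list \<Rightarrow> nat \<Rightarrow> nat" where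
  "sorted_pos B k = smaller B (B!k) + occ B (B!k) 0 k"

definition class_end :: "nat list \<Rightarrow> nat \<Rightarrow> nat" where
  "class_end B k = smaller B (B!k) + occ B (B!k) 0 (length B)"

definition sorted_at :: "nat list \<Rightarrow> nat \<Rightarrow> nat" where
  "sorted_at B a = (if \<exists>q. q < length B \<and> sorted_pos B q = a
                    then SOME q. q < length B \<and> sorted_pos B q = a else 0)"

lemma occ_filter: "occ B x l h = length (filter (\<lambda>q. B!q = x) [l..<h])"
proof -
  have "set (filter (\<lambda>q. B!q = x) [l..<h]) = {q. l \<le> q \<and> q < h \<and> B!q = x}" by auto
  then show ?thesis unfolding occ_def by (metis distinct_card distinct_filter distinct_upt)
qed

lemma occ_split: "l \<le> m \<Longrightarrow> m \<le> h \<Longrightarrow> occ B x l h = occ B x l m + occ B x m h"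
proof -
  assume "l \<le> m" "m \<le> h"
  then have "[l..<h] = [l..<m] @ [m..<h]" by (metis le_Suc_ex upt_add_eq_append)
  then show ?thesis by (simp add: occ_filter)
qed

lemma occ_Suc: "l \<le> h \<Longrightarrow> occ B x l (Suc h) = occ B x l h + (if B!h = x then 1 else 0)"
  by (simp add: occ_filter)

lemma occ_empty: "h \<le> l \<Longrightarrow> occ B x l h = 0"
  by (simp add: occ_filter)

lemma occ_zero: "(\<forall>q. l \<le> q \<and> q < h \<longrightarrow> B!q \<noteq> x) \<Longrightarrow> occ B x l h = 0"
  unfolding occ_def by auto

lemma occ_sub: "l \<le> l' \<Longrightarrow> h' \<le> h \<Longrightarrow> occ B x l' h' \<le> occ B x l h"
  unfolding occ_def by (rule card_mono) auto

lemma occ_le: "occ B x l h \<le> h - l"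
proof -
  have "{q. l \<le> q \<and> q < h \<and> B!q = x} \<subseteq> {l..<h}" by auto
  then show ?thesis unfolding occ_def by (metis card_atLeastLessThan card_mono finite_atLeastLessThan)
qed

lemma occ_prefix_attains: "r < occ B x 0 h \<Longrightarrow> \<exists>q<h. B!q = x \<and> occ B x 0 q = r"
proof (induction h)
  case 0 then show ?case by (simp add: occ_empty)
next
  case (Suc h)
  show ?case
  proof (cases "r < occ B x 0 h")
    case True then show ?thesis using Suc.IH by (meson less_SucI)
  next
    case False
    with Suc.prems occ_Suc[of 0 h B x] have "B!h = x" "occ B x 0 h = r" by (auto split: if_splits)
    then show ?thesis by auto
  qed
qed

lemma occ_prefix_less_iff: "B!q = x \<Longrightarrow> occ B x 0 q < occ B x 0 h \<longleftrightarrow> q < h"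
proof
  assume "B!q = x" "occ B x 0 q < occ B x 0 h"
  then show "q < h" using occ_sub[of 0 0 h q B x] by (meson leI not_less order_refl)
next
  assume a: "B!q = x" "q < h"
  have "occ B x 0 (Suc q) = Suc (occ B x 0 q)" using occ_Suc[of 0 q B x] a by simp
  moreover have "occ B x 0 (Suc q) \<le> occ B x 0 h" using a by (intro occ_sub) simp_all
  ultimately show "occ B x 0 q < occ B x 0 h" by simp
qed

lemma smaller_class_le: assumes "x < x'" shows "smaller B x + occ B x 0 (length B) \<le> smaller B x'"
proof -
  let ?A = "{q. q < length B \<and> B!q < x}" and ?C = "{q. 0 \<le> q \<and> q < length B \<and> B!q = x}"
  have "card ?A + card ?C = card (?A \<union> ?C)" by (rule card_Un_disjoint[symmetric]) auto
  also have "\<dots> \<le> card {q. q < length B \<and> B!q < x'}" by (rule card_mono) (use assms in auto)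
  finally show ?thesis unfolding smaller_def occ_def .
qed

lemma class_end_le: "class_end B k \<le> length B"
proof -
  let ?A = "{q. q < length B \<and> B!q < B!k}" and ?C = "{q. 0 \<le> q \<and> q < length B \<and> B!q = B!k}"
  have "card ?A + card ?C = card (?A \<union> ?C)" by (rule card_Un_disjoint[symmetric]) auto
  also have "\<dots> \<le> card {..<length B}" by (rule card_mono) auto
  finally show ?thesis unfolding class_end_def smaller_def occ_def by simp
qed

lemma sorted_pos_less: "k < length B \<Longrightarrow> sorted_pos B k < class_end B k"
  unfolding class_end_def sorted_pos_def using occ_prefix_less_iff by simp

lemma sorted_pos_inj:
  assumes "q < length B" "q' < length B" "sorted_pos B q = sorted_pos B q'" shows "q = q'"
proof -
  have no_tie: False if ab: "a < length B" "b < length B" "sorted_pos B a = sorted_pos B b" "a < b" for a b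
  proof (cases "B!a = B!b")
    case True
    then have "occ B (B!a) 0 a < occ B (B!a) 0 b" using occ_prefix_less_iff[of B a "B!a" b] ab by simp
    then show False using ab True by (simp add: sorted_pos_def)
  next
    case False
    have no_cross: False if cd: "c < length B" "sorted_pos B c = sorted_pos B d" "B!c < B!d" for c d
    proof -
      have "sorted_pos B c < smaller B (B!d)"
        using sorted_pos_less[OF cd(1)] smaller_class_le[OF cd(3), of B] unfolding class_end_def by simp
      then show False using cd by (simp add: sorted_pos_def)
    qed
    show False using no_cross[of a b] no_cross[of b a] ab False by (metis linorder_neqE_nat)
  qed
  show ?thesis using no_tie[of q q'] no_tie[of q' q] assms by (metis linorder_neqE_nat)
qed

lemma sorted_at_pos: "q < length B \<Longrightarrow> sorted_at B (sorted_pos B q) = q"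
  unfolding sorted_at_def using sorted_pos_inj by (auto intro!: some_equality)

lemma sorted_at_less: "0 < length B \<Longrightarrow> sorted_at B a < length B"
proof (cases "\<exists>q. q < length B \<and> sorted_pos B q = a")
  case True
  then show ?thesis unfolding sorted_at_def by (simp add: someI_ex[OF True, THEN conjunct1])
qed (auto simp: sorted_at_def)

lemma next_occurrence_test:
  assumes "k < length B" "k < h" "h \<le> length B"
  shows "(sorted_pos B k + f < class_end B k \<and> sorted_at B (sorted_pos B k + f) < h)
         \<longleftrightarrow> f < occ B (B!k) k h"
proof -
  define x where "x = B!k"
  define g where "g = (\<lambda>h. occ B x 0 h)"
  have ch: "occ B x k h = g h - g k" using occ_split[of 0 k h B x] assms by (simp add: g_def)
  have pos_k: "sorted_pos B k = smaller B x + g k" by (simp add: sorted_pos_def g_def x_def)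
  have end_k: "class_end B k = smaller B x + g (length B)" by (simp add: class_end_def g_def x_def)
  show ?thesis
  proof (cases "g k + f < g (length B)")
    case True
    then obtain q where q: "q < length B" "B!q = x" "g q = g k + f"
      using occ_prefix_attains[of "g k + f" B x "length B"] by (auto simp: g_def)
    have "sorted_pos B q = sorted_pos B k + f" using q pos_k by (simp add: sorted_pos_def g_def)
    then have "sorted_at B (sorted_pos B k + f) = q" using sorted_at_pos[OF q(1)] by simp
    moreover have "q < h \<longleftrightarrow> g q < g h" using occ_prefix_less_iff[of B q x h] q by (simp add: g_def)
    ultimately show ?thesis using ch q True pos_k end_k by (simp add: x_def[symmetric]) linarith
  next
    case False
    have "g h \<le> g (length B)" using assms occ_sub by (simp add: g_def)
    then show ?thesis using ch False pos_k end_k by (simp add: x_def[symmetric])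
  qed
qed

lemma occ_rev:
  assumes "l \<le> h" "h \<le> length A"
  shows "occ (rev A) x l h = occ A x (length A - h) (length A - l)"
proof -
  let ?n = "length A"
  let ?S = "{q. l \<le> q \<and> q < h \<and> rev A!q = x}"
  have inj: "inj_on (\<lambda>q. ?n - Suc q) ?S" using assms by (auto simp: inj_on_def)
  have "(\<lambda>q. ?n - Suc q) ` ?S = {q. ?n - h \<le> q \<and> q < ?n - l \<and> A!q = x}"
  proof (rule set_eqI, rule iffI)
    fix y assume "y \<in> (\<lambda>q. ?n - Suc q) ` ?S"
    then obtain q where "q \<in> ?S" "y = ?n - Suc q" by blast
    then show "y \<in> {q. ?n - h \<le> q \<and> q < ?n - l \<and> A!q = x}" using assms by (auto simp: rev_nth)
  next
    fix y assume y: "y \<in> {q. ?n - h \<le> q \<and> q < ?n - l \<and> A!q = x}"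
    have "?n - Suc y \<in> ?S" using y assms by (auto simp: rev_nth)
    moreover have "y = ?n - Suc (?n - Suc y)" using y assms by auto
    ultimately show "y \<in> (\<lambda>q. ?n - Suc q) ` ?S" by blast
  qed
  then show ?thesis unfolding occ_def using card_image[OF inj] by simp
qed


section \<open>Scanning the prefix and the suffix of a query range\<close>

definition scan_step :: "nat list \<Rightarrow> nat \<Rightarrow> nat \<times> nat \<Rightarrow> nat \<Rightarrow> nat \<times> nat" where
  "scan_step B h cf k = (let v = occ B (B!k) k h in if snd cf < v then (B!k, v) else cf)"

definition cand_inv :: "nat list \<Rightarrow> nat \<Rightarrow> nat \<Rightarrow> nat \<Rightarrow> nat \<Rightarrow> nat set \<Rightarrow> nat \<times> nat \<Rightarrow> bool" where
  "cand_inv A lo hi pe se D cf \<longleftrightarrow> snd cf \<le> occ A (fst cf) lo hi \<and> (\<forall>y. occ A y pe se \<le> snd cf) \<and>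
     (\<forall>k\<in>D. occ A (A!k) lo hi \<le> snd cf)"

lemma scan_step_mono: "snd cf \<le> snd (scan_step B h cf k)"
  by (auto simp: scan_step_def Let_def)

lemma scan_step_bounded: "h \<le> length B \<Longrightarrow> snd cf \<le> length B \<Longrightarrow> snd (scan_step B h cf k) \<le> length B"
  using occ_le[of B "B!k" k h] by (auto simp: scan_step_def Let_def)

lemma scan_mono: "snd cf \<le> snd (foldl (scan_step B h) cf ks)"
proof (induction ks arbitrary: cf)
  case (Cons k ks)
  show ?case using order_trans[OF scan_step_mono Cons.IH] by simp
qed simp

lemma scan_bounded: "h \<le> length B \<Longrightarrow> snd cf \<le> length B \<Longrightarrow> snd (foldl (scan_step B h) cf ks) \<le> length B"
  by (induction ks arbitrary: cf) (auto simp: scan_step_bounded)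

lemma cand_inv_insert:
  assumes inv: "cand_inv A lo hi pe se D (c, f)"
    and v: "v \<le> occ A (A!k) lo hi" and exact: "occ A (A!k) lo hi \<le> max f v"
  shows "cand_inv A lo hi pe se (insert k D) (if f < v then (A!k, v) else (c, f))"
  using inv v exact unfolding cand_inv_def by (auto intro: order_trans)

text \<open>The count of A!k after k, in the prefix phase, is exact unless A!k already occurred
  among the examined positions [lo, k).\<close>
lemma prefix_scan_step:
  assumes inv: "cand_inv A lo hi pe se {lo..<k} cf" and k: "lo \<le> k" "k < hi"
  shows "cand_inv A lo hi pe se {lo..<Suc k} (scan_step A hi cf k)"
proof -
  obtain c f where cf: "cf = (c,f)" by fastforce
  let ?x = "A!k"
  let ?v = "occ A ?x k hi"
  have exact: "occ A ?x lo hi \<le> max f ?v"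
  proof (cases "\<exists>k0. lo \<le> k0 \<and> k0 < k \<and> A!k0 = ?x")
    case True
    then obtain k0 where k0: "lo \<le> k0" "k0 < k" "A!k0 = ?x" by blast
    then have "k0 \<in> {lo..<k}" by simp
    then have "occ A (A!k0) lo hi \<le> f" using inv by (simp add: cand_inv_def cf)
    then show ?thesis using k0 by simp
  next
    case False
    then have "occ A ?x lo k = 0" by (intro occ_zero) auto
    then show ?thesis using occ_split[of lo k hi A ?x] k by simp
  qed
  have "?v \<le> occ A ?x lo hi" using k by (intro occ_sub) auto
  note step = cand_inv_insert[OF inv[unfolded cf] this exact]
  have "scan_step A hi cf k = (if f < ?v then (?x, ?v) else (c, f))"
    by (simp add: cf scan_step_def Let_def)
  moreover have "insert k {lo..<k} = {lo..<Suc k}" using k by auto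
  ultimately show ?thesis using step by simp
qed

lemma prefix_scan:
  assumes "cand_inv A lo hi pe se {lo..<k} cf" "lo \<le> k" "k \<le> pe" "pe \<le> hi"
  shows "cand_inv A lo hi pe se {lo..<pe} (foldl (scan_step A hi) cf [k..<pe])"
  using assms
proof (induction "pe - k" arbitrary: k cf rule: less_induct)
  case less
  show ?case
  proof (cases "k < pe")
    case False
    then show ?thesis using less.prems by simp
  next
    case True
    have "cand_inv A lo hi pe se {lo..<Suc k} (scan_step A hi cf k)"
      using prefix_scan_step[OF less.prems(1,2)] True less.prems by simp
    from less.hyps[OF _ this] True less.prems
    show ?thesis by (simp add: upt_conv_Cons)
  qed
qed

text \<open>The suffix phase scans position k = n - 1 - K of A as position K of rev A; counting
  in rev A from K up to n - lo counts A!k in [lo, k], exact unless A!k occurs in (k, hi).\<close>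
lemma suffix_scan_step:
  assumes inv: "cand_inv A lo hi pe se ({lo..<pe} \<union> {length A - K..<hi}) cf"
    and K: "length A - hi \<le> K" "K < length A - se"
    and ord: "lo \<le> pe" "pe \<le> se" "se \<le> hi" "hi \<le> length A"
  shows "cand_inv A lo hi pe se ({lo..<pe} \<union> {length A - Suc K..<hi})
           (scan_step (rev A) (length A - lo) cf K)"
proof -
  let ?n = "length A"
  define k where "k = ?n - Suc K"
  have kr: "se \<le> k" "k < hi" "K < ?n" using K ord by (auto simp: k_def)
  obtain c f where cf: "cf = (c,f)" by fastforce
  let ?x = "A!k"
  let ?v = "occ A ?x lo (Suc k)"
  have rx: "rev A ! K = ?x" using kr by (simp add: rev_nth k_def)
  have rv: "occ (rev A) ?x K (?n - lo) = ?v"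
    using occ_rev[of K "?n - lo" A ?x] kr ord by (simp add: k_def Suc_diff_Suc)
  have exact: "occ A ?x lo hi \<le> max f ?v"
  proof (cases "\<exists>k0. k < k0 \<and> k0 < hi \<and> A!k0 = ?x")
    case True
    then obtain k0 where k0: "k < k0" "k0 < hi" "A!k0 = ?x" by blast
    then have "k0 \<in> {?n - K..<hi}" using kr by (auto simp: k_def)
    then have "occ A (A!k0) lo hi \<le> f" using inv by (simp add: cand_inv_def cf)
    then show ?thesis using k0 by simp
  next
    case False
    then have "occ A ?x (Suc k) hi = 0" by (intro occ_zero) auto
    then show ?thesis using occ_split[of lo "Suc k" hi A ?x] kr ord by simp
  qed
  have "?v \<le> occ A ?x lo hi" using kr by (intro occ_sub) auto
  note step = cand_inv_insert[OF inv[unfolded cf] this exact]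
  have "scan_step (rev A) (?n - lo) cf K = (if f < ?v then (?x, ?v) else (c, f))"
    by (simp add: cf scan_step_def Let_def rx rv)
  moreover have "insert k ({lo..<pe} \<union> {?n - K..<hi}) = {lo..<pe} \<union> {?n - Suc K..<hi}"
    using kr K by (auto simp: k_def)
  ultimately show ?thesis using step by simp
qed

lemma suffix_scan:
  assumes "cand_inv A lo hi pe se ({lo..<pe} \<union> {length A - K..<hi}) cf"
    "length A - hi \<le> K" "K \<le> length A - se" "lo \<le> pe" "pe \<le> se" "se \<le> hi" "hi \<le> length A"
  shows "cand_inv A lo hi pe se ({lo..<pe} \<union> {se..<hi})
           (foldl (scan_step (rev A) (length A - lo)) cf [K..<length A - se])"
  using assms
proof (induction "length A - se - K" arbitrary: K cf rule: less_induct)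
  case less
  show ?case
  proof (cases "K < length A - se")
    case False
    then have "length A - K = se" using less.prems by simp
    then show ?thesis using less.prems False by simp
  next
    case True
    have "cand_inv A lo hi pe se ({lo..<pe} \<union> {length A - Suc K..<hi})
            (scan_step (rev A) (length A - lo) cf K)"
      using suffix_scan_step[OF less.prems(1,2) True] less.prems by simp
    from less.hyps[OF _ this] True less.prems
    show ?thesis by (simp add: upt_conv_Cons)
  qed
qed

lemma subarray_eq: "1 \<le> i \<Longrightarrow> j \<le> length A \<Longrightarrow> subarray A i j = mset (map (nth A) [i - 1..<j])"
  unfolding subarray_def by (rule arg_cong[where f=mset], rule nth_equalityI) auto

lemma count_range: "count (mset (map (nth A) [lo..<hi])) y = occ A y lo hi"
  unfolding count_mset count_list_eq_length_filter filter_map length_map occ_filter o_def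
  by (rule arg_cong[where f=length], rule filter_cong) auto

text \<open>Once both the prefix and the suffix are examined, the candidate is a mode: a value
  occurring in neither has all of its occurrences inside the block span.\<close>
lemma cand_inv_mode:
  assumes inv: "cand_inv A lo hi pe se ({lo..<pe} \<union> {se..<hi}) (c, f)"
    and ord: "lo \<le> pe" "pe \<le> se" "se \<le> hi" "lo < hi"
  shows "is_mode (mset (map (nth A) [lo..<hi])) c"
proof -
  have dominated: "occ A y lo hi \<le> f" if "lo \<le> q" "q < hi" "A!q = y" for q y
  proof (cases "\<exists>q'. q' \<in> {lo..<pe} \<union> {se..<hi} \<and> A!q' = y")
    case True
    then show ?thesis using inv by (auto simp: cand_inv_def)
  next
    case False
    then have "occ A y lo pe = 0" "occ A y se hi = 0" by (auto intro!: occ_zero)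
    moreover have "occ A y lo hi = occ A y lo pe + occ A y pe se + occ A y se hi"
      using occ_split[of lo pe hi A y] occ_split[of pe se hi A y] ord by simp
    ultimately show ?thesis using inv by (simp add: cand_inv_def)
  qed
  have "0 < occ A (A!lo) lo hi"
    using occ_prefix_less_iff[of A lo "A!lo" hi] occ_split[of 0 lo hi A "A!lo"] ord by simp
  then have "0 < f" using dominated[of lo] ord by fastforce
  moreover have fc: "f \<le> occ A c lo hi" using inv by (simp add: cand_inv_def)
  ultimately have "c \<in># mset (map (nth A) [lo..<hi])"
    by (simp only: count_greater_zero_iff[symmetric] count_range)
  moreover have "occ A x lo hi \<le> occ A c lo hi" if x_in: "x \<in># mset (map (nth A) [lo..<hi])" for x
  proof -
    obtain q where "lo \<le> q" "q < hi" "A!q = x" using x_in by auto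
    then show ?thesis using dominated fc le_trans by blast
  qed
  ultimately show ?thesis unfolding is_mode_def count_range by blast
qed

lemma two_phase_scan:
  assumes init: "cand_inv A lo hi pe se {} cf"
    and ord: "lo \<le> pe" "pe \<le> se" "se \<le> hi" "lo < hi" "hi \<le> length A"
  defines "F \<equiv> foldl (scan_step (rev A) (length A - lo)) (foldl (scan_step A hi) cf [lo..<pe])
                 [length A - hi..<length A - se]"
  shows "is_mode (mset (map (nth A) [lo..<hi])) (fst F)" "snd F \<le> (pe - lo) + snd cf + (hi - se)"
proof -
  have "cand_inv A lo hi pe se {lo..<pe} (foldl (scan_step A hi) cf [lo..<pe])"
    by (rule prefix_scan) (use init ord in auto)
  then have "cand_inv A lo hi pe se ({lo..<pe} \<union> {length A - (length A - hi)..<hi})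
               (foldl (scan_step A hi) cf [lo..<pe])"
    using ord by simp
  from suffix_scan[OF this] ord
  have inv: "cand_inv A lo hi pe se ({lo..<pe} \<union> {se..<hi}) F" by (simp add: F_def)
  then show "is_mode (mset (map (nth A) [lo..<hi])) (fst F)"
    using cand_inv_mode[of A lo hi pe se "fst F" "snd F"] ord by simp
  have "snd F \<le> occ A (fst F) lo hi" using inv by (simp add: cand_inv_def)
  also have "\<dots> = occ A (fst F) lo pe + occ A (fst F) pe se + occ A (fst F) se hi"
    using occ_split[of lo pe hi A "fst F"] occ_split[of pe se hi A "fst F"] ord by simp
  also have "\<dots> \<le> (pe - lo) + snd cf + (hi - se)"
    using occ_le[of A "fst F" lo pe] occ_le[of A "fst F" se hi] init by (simp add: cand_inv_def add_mono)
  finally show "snd F \<le> (pe - lo) + snd cf + (hi - se)" .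
qed

section \<open>The query program\<close>

lemma run_0 [simp]: "run w P 0 s = s"
  by (simp add: run_def)

lemma run_Suc: "run w P (Suc t) s = run w P t (step w P s)"
  by (simp add: run_def funpow_swap1)

lemma run_numeral: "run w P (numeral k) s = run w P (pred_numeral k) (step w P s)"
  by (simp add: numeral_eq_Suc run_Suc)

lemma run_one: "run w P 1 s = step w P s"
  by (simp add: run_def)

lemma run_add: "run w P (a + b) s = run w P b (run w P a s)"
  by (metis (no_types) run_def funpow_add add.commute comp_apply)

text \<open>Memory header (cells 0..10): block length t, number of blocks W, n, the base
  addresses of the block-span mode and frequency tables, and for A and for rev A the base
  addresses of the three scan arrays (sorted_pos, class_end, value).  Query (i, j) arrives
  in registers 0 and 1; register 12 holds the constant 1, register 30 the constant 0.

  Positions 0..41: compute lo = i - 1, the block indices bL = ceil(lo/t) and bR = floor(j/t),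
  the initial candidate (register 0) and frequency (register 5) from the tables, the prefix
  end pe (register 3) and the suffix start se (register 25), and load the arrays of A.\<close>
definition prelude_code :: "instr list" where
  "prelude_code =
    [Const 12 1, Sub 13 0 12, Const 14 0, Load 15 14, Const 14 1, Load 16 14, Const 14 2,
     Load 17 14, Add 18 13 15, Sub 18 18 12, Div 18 18 15, Div 19 1 15, Mul 20 18 15,
     Mul 21 19 15, Mul 22 18 16, Add 22 22 19, Const 14 3, Load 23 14, Add 23 23 22,
     Load 0 23, Const 14 4, Load 23 14, Add 23 23 22, Load 5 23, Less 9 20 1, Jz 9 28,
     Add 3 20 30, Jmp 29, Add 3 1 30, Less 9 21 3, Jz 9 33, Add 25 3 30, Jmp 34,
     Add 25 21 30, Add 2 13 30, Add 4 1 30, Const 14 5, Load 6 14, Const 14 6, Load 7 14,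
     Const 14 7, Load 8 14]"

text \<open>Positions 42..59: the scan loop over positions k (register 2) below register 3, with
  upper range end in register 4.  Register 10 becomes the address of the entry f places
  after k in the sorted order, register 11 the end of the class; if the entry is in the class
  and its position precedes the range end, the candidate becomes B!k with frequency f + 1
  and the same k is tested again, otherwise k advances.\<close>
definition loop_code :: "instr list" where
  "loop_code =
    [Less 9 2 3, Jz 9 60, Add 10 6 2, Load 10 10, Add 10 10 5, Add 11 7 2, Load 11 11,
     Less 9 10 11, Jz 9 58, Load 10 10, Less 9 10 4, Jz 9 58, Add 5 5 12, Add 10 8 2,
     Load 0 10, Jmp 42, Add 2 2 12, Jmp 42]"

text \<open>Positions 60..72: after the first run of the loop (register 26 = 0) restart it on the
  arrays of rev A over the reversed suffix [n - j, n - se) with range end n - lo; after the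
  second run halt.\<close>
definition switch_code :: "instr list" where
  "switch_code =
    [Jz 26 62, Halt, Add 26 12 30, Sub 2 17 1, Sub 3 17 25, Sub 4 17 13, Const 14 8,
     Load 6 14, Const 14 9, Load 7 14, Const 14 10, Load 8 14, Jmp 42]"

definition mode_program :: "instr list" where
  "mode_program = prelude_code @ loop_code @ switch_code"

lemma mode_program_length: "length mode_program = 73"
  by (simp add: mode_program_def prelude_code_def loop_code_def switch_code_def)

lemma mode_program_nth:
  "mode_program ! k = (prelude_code @ loop_code @ switch_code) ! k"
  by (simp only: mode_program_def)

lemma step_exec:
  "pc s < length P \<Longrightarrow> P ! pc s \<noteq> Halt \<Longrightarrow> step w P s = exec_instr w (P ! pc s) s"
  by (simp add: step_def halted_def)

lemmas exec_simps = run_numeral run_one run_Suc step_exec mode_program_nth mode_program_length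
  prelude_code_def loop_code_def switch_code_def setr_def

definition at_loop :: "(nat \<Rightarrow> nat) \<Rightarrow> (nat \<Rightarrow> nat) \<Rightarrow> nat \<Rightarrow> nat \<Rightarrow> nat \<Rightarrow> state \<Rightarrow> bool" where
  "at_loop M R k f c s \<longleftrightarrow> pc s = 42 \<and> mem s = M \<and> regs s 2 = k \<and> regs s 5 = f \<and> regs s 0 = c \<and>
     (\<forall>r. r \<notin> {0,2,5,9,10,11} \<longrightarrow> regs s r = R r)"

definition at_exit :: "(nat \<Rightarrow> nat) \<Rightarrow> (nat \<Rightarrow> nat) \<Rightarrow> nat \<Rightarrow> nat \<Rightarrow> state \<Rightarrow> bool" where
  "at_exit M R f c s \<longleftrightarrow> pc s = 60 \<and> mem s = M \<and> regs s 5 = f \<and> regs s 0 = c \<and>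
     (\<forall>r. r \<notin> {0,2,5,9,10,11} \<longrightarrow> regs s r = R r)"

text \<open>The frozen registers point to the scan arrays of B (based so that sorted positions
  are stored as addresses q + sorted_pos), the inverse sorted_at is stored at q, and all
  addresses and cells fit into a word.\<close>
definition loop_tables :: "nat \<Rightarrow> nat list \<Rightarrow> (nat \<Rightarrow> nat) \<Rightarrow> (nat \<Rightarrow> nat) \<Rightarrow> nat \<Rightarrow> bool" where
  "loop_tables w B M R q \<longleftrightarrow> R 12 = 1 \<and> R 3 \<le> R 4 \<and> R 4 \<le> length B \<and>
     (\<forall>k<length B. M (R 6 + k) = q + sorted_pos B k \<and> M (R 7 + k) = q + class_end B k \<and> M (R 8 + k) = B!k) \<and>
     (\<forall>a<length B. M (q + a) = sorted_at B a) \<and> (\<forall>a. M a < 2^w) \<and>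
     R 6 + length B < 2^w \<and> R 7 + length B < 2^w \<and> R 8 + length B < 2^w \<and> q + 2 * length B < 2^w"

lemma at_loop_regs:
  assumes "at_loop M R k f c s"
  shows "pc s = 42" "mem s = M" "regs s 2 = k" "regs s 5 = f" "regs s 0 = c" "regs s 3 = R 3"
    "regs s 4 = R 4" "regs s 6 = R 6" "regs s 7 = R 7" "regs s 8 = R 8" "regs s 12 = R 12"
  using assms by (auto simp: at_loop_def)

lemma loop_exit:
  assumes L: "at_loop M R k f c s" and k: "\<not> k < R 3"
  shows "at_exit M R f c (run w mode_program 2 s)"
  using L at_loop_regs[OF L] k by (simp add: exec_simps at_loop_def at_exit_def)

lemma loop_facts:
  assumes D: "loop_tables w B M R q" and k: "k < R 3" and f: "f \<le> length B"
  shows "k < length B" "k < R 4" "R 4 \<le> length B"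
   "M (R 6 + k) = q + sorted_pos B k" "M (R 7 + k) = q + class_end B k" "M (R 8 + k) = B!k" "R 12 = 1"
   "R 6 + k < 2^w" "R 7 + k < 2^w" "R 8 + k < 2^w" "q + sorted_pos B k < 2^w"
   "q + sorted_pos B k + f < 2^w" "q + class_end B k < 2^w" "B!k < 2^w" "Suc k < 2^w"
   "sorted_pos B k + f < class_end B k \<Longrightarrow> M (q + sorted_pos B k + f) = sorted_at B (sorted_pos B k + f)"
   "M (q + sorted_pos B k + f) < 2^w" "sorted_pos B k + f < class_end B k \<Longrightarrow> Suc f < 2^w"
proof -
  show n: "k < length B" "k < R 4" "R 4 \<le> length B" using D k by (auto simp: loop_tables_def)
  have el: "class_end B k \<le> length B" by (rule class_end_le)
  show m: "M (R 6 + k) = q + sorted_pos B k" "M (R 7 + k) = q + class_end B k" "M (R 8 + k) = B!k" "R 12 = 1"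
    using D n by (auto simp: loop_tables_def)
  have pl: "sorted_pos B k < length B" using sorted_pos_less[OF n(1)] el by linarith
  show w: "R 6 + k < 2^w" "R 7 + k < 2^w" "R 8 + k < 2^w" "q + sorted_pos B k < 2^w"
    "q + sorted_pos B k + f < 2^w" "q + class_end B k < 2^w" "M (q + sorted_pos B k + f) < 2^w"
    using D n el f pl by (auto simp: loop_tables_def)
  show "B!k < 2^w" using m w by (metis D loop_tables_def)
  show "Suc k < 2^w" "sorted_pos B k + f < class_end B k \<Longrightarrow> Suc f < 2^w"
    using D n el by (auto simp: loop_tables_def)
  show "sorted_pos B k + f < class_end B k \<Longrightarrow> M (q + sorted_pos B k + f) = sorted_at B (sorted_pos B k + f)"
    using D el by (auto simp: loop_tables_def add.assoc)
qed

lemma loop_hit: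
  assumes D: "loop_tables w B M R q" and L: "at_loop M R k f c s" and k: "k < R 3"
    and f: "f < occ B (B!k) k (R 4)" and fl: "f \<le> length B"
  shows "at_loop M R k (Suc f) (B!k) (run w mode_program 16 s)"
proof -
  note c = loop_facts[OF D k fl]
  have "sorted_pos B k + f < class_end B k" "sorted_at B (sorted_pos B k + f) < R 4"
    using next_occurrence_test[OF c(1,2,3)] f by auto
  then show ?thesis using L at_loop_regs[OF L] c k by (simp add: exec_simps at_loop_def)
qed

lemma loop_miss_class:
  assumes D: "loop_tables w B M R q" and L: "at_loop M R k f c s" and k: "k < R 3"
    and f: "\<not> sorted_pos B k + f < class_end B k" and fl: "f \<le> length B"
  shows "at_loop M R (Suc k) f c (run w mode_program 11 s)"
  using L at_loop_regs[OF L] f loop_facts[OF D k fl] k by (simp add: exec_simps at_loop_def)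

lemma loop_miss_range:
  assumes D: "loop_tables w B M R q" and L: "at_loop M R k f c s" and k: "k < R 3"
    and f: "sorted_pos B k + f < class_end B k" "\<not> sorted_at B (sorted_pos B k + f) < R 4"
    and fl: "f \<le> length B"
  shows "at_loop M R (Suc k) f c (run w mode_program 14 s)"
  using L at_loop_regs[OF L] f loop_facts[OF D k fl] k by (simp add: exec_simps at_loop_def)


lemma loop_position:
  assumes D: "loop_tables w B M R q" and L: "at_loop M R k f c s" and k: "k < R 3"
    and fl: "f \<le> length B"
  shows "\<exists>t. t \<le> 16 * (snd (scan_step B (R 4) (c,f) k) - f) + 14 \<and>
     at_loop M R (Suc k) (snd (scan_step B (R 4) (c,f) k)) (fst (scan_step B (R 4) (c,f) k))
       (run w mode_program t s)"
  using L fl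
proof (induction "occ B (B!k) k (R 4) - f" arbitrary: f c s rule: less_induct)
  case less
  note facts = loop_facts[OF D k less.prems(2)]
  show ?case
  proof (cases "f < occ B (B!k) k (R 4)")
    case True
    have L1: "at_loop M R k (Suc f) (B!k) (run w mode_program 16 s)"
      by (rule loop_hit[OF D less.prems(1) k True less.prems(2)])
    have "occ B (B!k) k (R 4) \<le> length B" using occ_le[of B "B!k" k "R 4"] facts(3) by linarith
    then have sl: "Suc f \<le> length B" using True by linarith
    have same: "scan_step B (R 4) (B!k, Suc f) k = scan_step B (R 4) (c, f) k"
      and val: "snd (scan_step B (R 4) (c, f) k) = occ B (B!k) k (R 4)"
      using True by (auto simp: scan_step_def Let_def)
    have "occ B (B!k) k (R 4) - Suc f < occ B (B!k) k (R 4) - f" using True by simp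
    from less.hyps[OF this L1 sl] obtain t where
      "t \<le> 16 * (snd (scan_step B (R 4) (c, f) k) - Suc f) + 14"
      "at_loop M R (Suc k) (snd (scan_step B (R 4) (c, f) k)) (fst (scan_step B (R 4) (c, f) k))
         (run w mode_program t (run w mode_program 16 s))"
      by (auto simp: same)
    then show ?thesis using val True by (intro exI[of _ "16 + t"]) (simp add: run_add)
  next
    case False
    have same: "scan_step B (R 4) (c, f) k = (c, f)" using False by (auto simp: scan_step_def Let_def)
    have miss: "\<not> (sorted_pos B k + f < class_end B k \<and> sorted_at B (sorted_pos B k + f) < R 4)"
      using next_occurrence_test[OF facts(1,2,3)] False by auto
    show ?thesis
    proof (cases "sorted_pos B k + f < class_end B k")
      case True
      with miss have "\<not> sorted_at B (sorted_pos B k + f) < R 4" by auto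
      from loop_miss_range[OF D less.prems(1) k True this less.prems(2)] show ?thesis
        by (intro exI[of _ 14]) (simp add: same)
    next
      case False
      from loop_miss_class[OF D less.prems(1) k False less.prems(2)] show ?thesis
        by (intro exI[of _ 11]) (simp add: same)
    qed
  qed
qed

lemma loop_run:
  assumes D: "loop_tables w B M R q" and L: "at_loop M R k f c s" and fl: "f \<le> length B"
  shows "\<exists>t. t \<le> 16 * ((R 3 - k) + (snd (foldl (scan_step B (R 4)) (c,f) [k..<R 3]) - f)) + 2 \<and>
     at_exit M R (snd (foldl (scan_step B (R 4)) (c,f) [k..<R 3]))
       (fst (foldl (scan_step B (R 4)) (c,f) [k..<R 3])) (run w mode_program t s)"
  using L fl
proof (induction "R 3 - k" arbitrary: k f c s rule: less_induct)
  case less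
  show ?case
  proof (cases "k < R 3")
    case False
    then show ?thesis using loop_exit[OF less.prems(1) False] by (intro exI[of _ 2]) simp
  next
    case True
    define cf where "cf = scan_step B (R 4) (c,f) k"
    obtain t1 where t1: "t1 \<le> 16 * (snd cf - f) + 14"
      "at_loop M R (Suc k) (snd cf) (fst cf) (run w mode_program t1 s)"
      using loop_position[OF D less.prems(1) True less.prems(2)] by (auto simp: cf_def)
    have "R 4 \<le> length B" using D by (auto simp: loop_tables_def)
    then have bnd: "snd cf \<le> length B" using scan_step_bounded less.prems(2) by (simp add: cf_def)
    have lt: "R 3 - Suc k < R 3 - k" using True by simp
    obtain t2 where
      t2: "t2 \<le> 16 * ((R 3 - Suc k) + (snd (foldl (scan_step B (R 4)) cf [Suc k..<R 3]) - snd cf)) + 2"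
        "at_exit M R (snd (foldl (scan_step B (R 4)) cf [Suc k..<R 3]))
           (fst (foldl (scan_step B (R 4)) cf [Suc k..<R 3])) (run w mode_program t2 (run w mode_program t1 s))"
      using less.hyps[OF lt t1(2) bnd] by (elim exE conjE) simp
    have "f \<le> snd cf" using scan_step_mono[of "(c, f)"] by (simp add: cf_def)
    moreover have "snd cf \<le> snd (foldl (scan_step B (R 4)) cf [Suc k..<R 3])" by (rule scan_mono)
    ultimately show ?thesis using t1(1) t2 True
      by (intro exI[of _ "t1 + t2"]) (simp add: run_add upt_conv_Cons cf_def[symmetric])
  qed
qed

definition at_loop_entry :: "(nat \<Rightarrow> nat) \<Rightarrow> nat list \<Rightarrow> state \<Rightarrow> bool" where
  "at_loop_entry M vs s \<longleftrightarrow> pc s = 42 \<and> mem s = M \<and> map (regs s) [0,1,2,3,4,5,6,7,8,12,13,17,25,26,30] = vs"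

lemma prelude_run:
  assumes M: "M 0 = t" "M 1 = W" "M 2 = n" "M 3 = b3" "M 4 = b4" "M 5 = b5" "M 6 = b6" "M 7 = b7"
    "\<And>a. M a < 2^w" "W < 2^w" "n < 2^w" "b5 < 2^w" "b6 < 2^w" "b7 < 2^w"
  and d: "i - 1 = lo" "lo + t = x1" "x1 - 1 = x2" "x2 div t = bL" "j div t = bR" "bL * t = a" "bR * t = b"
      "bL * W = y" "y + bR = idx" "b3 + idx = ac" "b4 + idx = af"
  and w: "(8::nat) < 2^w" "j < 2^w" "x1 < 2^w" "a < 2^w" "b < 2^w" "y < 2^w" "idx < 2^w" "ac < 2^w" "af < 2^w"
  and w0: "0 < w"
  and pe: "pe = (if a < j then a else j)" and se: "se = (if b < pe then pe else b)"
  shows "\<exists>N\<le>42. at_loop_entry M [M ac, j, lo, pe, j, M af, b5, b6, b7, 1, lo, n, se, 0, 0]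
                  (run w mode_program N (query_init M i j))"
proof -
  note facts = M d w w0 pe se
  consider "a < j" "b < a" | "a < j" "\<not> b < a" | "\<not> a < j" "b < j" | "\<not> a < j" "\<not> b < j"
    by blast
  then show ?thesis
  proof cases
    case 1
    show ?thesis by (rule exI[of _ 40]) (use 1 facts in \<open>simp add: exec_simps query_init_def numeral_2_eq_2[symmetric] at_loop_entry_def\<close>)
  next
    case 2
    show ?thesis by (rule exI[of _ 39]) (use 2 facts in \<open>simp add: exec_simps query_init_def numeral_2_eq_2[symmetric] at_loop_entry_def\<close>)
  next
    case 3
    show ?thesis by (rule exI[of _ 39]) (use 3 facts in \<open>simp add: exec_simps query_init_def numeral_2_eq_2[symmetric] at_loop_entry_def\<close>)
  next
    case 4
    show ?thesis by (rule exI[of _ 38]) (use 4 facts in \<open>simp add: exec_simps query_init_def numeral_2_eq_2[symmetric] at_loop_entry_def\<close>)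
  qed
qed

lemma switch_to_suffix:
  assumes s: "pc s = 60" "mem s = M" "regs s 26 = 0" "regs s 17 = n" "regs s 1 = hi" "regs s 25 = se"
    "regs s 13 = lo" "regs s 12 = 1" "regs s 30 = 0"
  and M: "M 8 = b8" "M 9 = b9" "M 10 = b10" "b8 < 2^w" "b9 < 2^w" "b10 < 2^w"
  and w: "(16::nat) < 2^w" "0 < w"
  shows "pc (run w mode_program 12 s) = 42 \<and> mem (run w mode_program 12 s) = M \<and>
    regs (run w mode_program 12 s) 0 = regs s 0 \<and> regs (run w mode_program 12 s) 5 = regs s 5 \<and>
    regs (run w mode_program 12 s) 2 = n - hi \<and> regs (run w mode_program 12 s) 3 = n - se \<and>
    regs (run w mode_program 12 s) 4 = n - lo \<and> regs (run w mode_program 12 s) 6 = b8 \<and>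
    regs (run w mode_program 12 s) 7 = b9 \<and> regs (run w mode_program 12 s) 8 = b10 \<and>
    regs (run w mode_program 12 s) 12 = 1 \<and> regs (run w mode_program 12 s) 26 = 1"
  using s M w by (simp add: exec_simps)

lemma halt_after_suffix:
  assumes "pc s = 60" "regs s 26 = 1"
  shows "halted mode_program (run w mode_program 1 s) \<and> regs (run w mode_program 1 s) 0 = regs s 0"
  using assms by (simp add: exec_simps halted_def)


section \<open>The memory image\<close>

text \<open>Block length t = ceil(n^e) (at least 1) and number W of block boundaries 0, t, ...,
  covering [0, n].\<close>
definition block_len :: "real \<Rightarrow> nat \<Rightarrow> nat" where
  "block_len e n = max 1 (nat \<lceil>real n powr e\<rceil>)"

definition num_blocks :: "real \<Rightarrow> nat \<Rightarrow> nat" where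
  "num_blocks e n = (n + block_len e n - 1) div block_len e n + 1"

definition fwd_base :: "real \<Rightarrow> nat \<Rightarrow> nat" where
  "fwd_base e n = 11 + 2 * (num_blocks e n * num_blocks e n)"

definition rev_base :: "real \<Rightarrow> nat \<Rightarrow> nat" where
  "rev_base e n = fwd_base e n + 4 * n"

definition max_occ :: "nat list \<Rightarrow> nat \<Rightarrow> nat \<Rightarrow> nat" where
  "max_occ A l h = Max (insert 0 ((\<lambda>q. occ A (A!q) l h) ` {l..<h}))"

definition mode_in :: "nat list \<Rightarrow> nat \<Rightarrow> nat \<Rightarrow> nat" where
  "mode_in A l h = A ! (SOME q. l \<le> q \<and> q < h \<and> occ A (A!q) l h = max_occ A l h)"

definition table_mode :: "real \<Rightarrow> nat list \<Rightarrow> nat \<Rightarrow> nat \<Rightarrow> nat" where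
  "table_mode e A bL bR = (if bL * block_len e (length A) < min (bR * block_len e (length A)) (length A)
     then mode_in A (bL * block_len e (length A)) (min (bR * block_len e (length A)) (length A)) else 0)"

definition table_freq :: "real \<Rightarrow> nat list \<Rightarrow> nat \<Rightarrow> nat \<Rightarrow> nat" where
  "table_freq e A bL bR = max_occ A (bL * block_len e (length A)) (min (bR * block_len e (length A)) (length A))"

text \<open>The four arrays used by the scan loop on B, stored from address b: sorted positions
  and class ends (as absolute addresses into the fourth array), the values, and sorted_at.\<close>
definition scan_arrays :: "nat list \<Rightarrow> nat \<Rightarrow> nat \<Rightarrow> nat" where
  "scan_arrays B b d = (if d < length B then b + 3 * length B + sorted_pos B d
     else if d < 2 * length B then b + 3 * length B + class_end B (d - length B)
     else if d < 3 * length B then B ! (d - 2 * length B)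
     else if d < 4 * length B then sorted_at B (d - 3 * length B) else 0)"

definition encode :: "real \<Rightarrow> nat list \<Rightarrow> nat \<Rightarrow> nat" where
  "encode e A a = (let n = length A; W = num_blocks e n; b1 = fwd_base e n; b2 = rev_base e n in
     if a < 11 then [block_len e n, W, n, 11, 11 + W * W, b1, b1 + n, b1 + 2 * n, b2, b2 + n, b2 + 2 * n] ! a
     else if a < 11 + W * W then table_mode e A ((a - 11) div W) ((a - 11) mod W)
     else if a < 11 + 2 * (W * W) then table_freq e A ((a - 11 - W * W) div W) ((a - 11 - W * W) mod W)
     else if a < b2 then scan_arrays A b1 (a - b1)
     else if a < b2 + 4 * n then scan_arrays (rev A) b2 (a - b2) else 0)"

lemma encode_header:
  "encode e A 0 = block_len e (length A)" "encode e A 1 = num_blocks e (length A)"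
  "encode e A 2 = length A" "encode e A 3 = 11"
  "encode e A 4 = 11 + num_blocks e (length A) * num_blocks e (length A)"
  "encode e A 5 = fwd_base e (length A)" "encode e A 6 = fwd_base e (length A) + length A"
  "encode e A 7 = fwd_base e (length A) + 2 * length A" "encode e A 8 = rev_base e (length A)"
  "encode e A 9 = rev_base e (length A) + length A" "encode e A 10 = rev_base e (length A) + 2 * length A"
  by (simp_all add: encode_def Let_def)

lemma pair_index_less: assumes "bL < W" "bR < (W::nat)" shows "bL * W + bR < W * W"
proof -
  have "bL * W + bR < Suc bL * W" using assms(2) by simp
  also have "\<dots> \<le> W * W" using assms(1) by (intro mult_le_mono1) simp
  finally show ?thesis .
qed

lemma encode_tables:
  assumes "bL < num_blocks e (length A)" "bR < num_blocks e (length A)"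
  shows "encode e A (11 + (bL * num_blocks e (length A) + bR)) = table_mode e A bL bR"
    "encode e A (11 + num_blocks e (length A) * num_blocks e (length A) + (bL * num_blocks e (length A) + bR))
       = table_freq e A bL bR"
proof -
  let ?W = "num_blocks e (length A)"
  have "bL * ?W + bR < ?W * ?W" using pair_index_less assms by blast
  moreover have "(bL * ?W + bR) div ?W = bL" "(bL * ?W + bR) mod ?W = bR" using assms by auto
  ultimately show "encode e A (11 + (bL * ?W + bR)) = table_mode e A bL bR"
    "encode e A (11 + ?W * ?W + (bL * ?W + bR)) = table_freq e A bL bR"
    by (simp_all add: encode_def Let_def)
qed

lemma encode_fwd:
  assumes "k < length A"
  shows "encode e A (fwd_base e (length A) + k) = fwd_base e (length A) + 3 * length A + sorted_pos A k"
    "encode e A (fwd_base e (length A) + length A + k) = fwd_base e (length A) + 3 * length A + class_end A k"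
    "encode e A (fwd_base e (length A) + 2 * length A + k) = A ! k"
    "encode e A (fwd_base e (length A) + 3 * length A + k) = sorted_at A k"
  using assms by (simp_all add: encode_def Let_def scan_arrays_def rev_base_def fwd_base_def)

lemma encode_rev:
  assumes "k < length A"
  shows "encode e A (rev_base e (length A) + k) = rev_base e (length A) + 3 * length A + sorted_pos (rev A) k"
    "encode e A (rev_base e (length A) + length A + k) = rev_base e (length A) + 3 * length A + class_end (rev A) k"
    "encode e A (rev_base e (length A) + 2 * length A + k) = rev A ! k"
    "encode e A (rev_base e (length A) + 3 * length A + k) = sorted_at (rev A) k"
  using assms by (simp_all add: encode_def Let_def scan_arrays_def rev_base_def fwd_base_def)

lemma encode_zero: "rev_base e (length A) + 4 * length A \<le> a \<Longrightarrow> encode e A a = 0"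
  by (simp add: encode_def Let_def rev_base_def fwd_base_def)

lemma max_occ_ge: "occ A y l h \<le> max_occ A l h"
proof (cases "occ A y l h = 0")
  case False
  then obtain q where q: "l \<le> q" "q < h" "A!q = y"
    unfolding occ_def by (metis (mono_tags, lifting) card.empty empty_Collect_eq)
  then show ?thesis unfolding max_occ_def by (intro Max_ge) auto
qed simp

lemma max_occ_le: "max_occ A l h \<le> h - l"
  unfolding max_occ_def using occ_le by (intro Max.boundedI) auto

lemma max_occ_empty: "h \<le> l \<Longrightarrow> max_occ A l h = 0"
  unfolding max_occ_def by simp

lemma mode_in_spec:
  assumes "l < h"
  shows "\<exists>q. l \<le> q \<and> q < h \<and> mode_in A l h = A!q \<and> occ A (A!q) l h = max_occ A l h"
proof -
  let ?S = "(\<lambda>q. occ A (A!q) l h) ` {l..<h}"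
  have ne: "?S \<noteq> {}" using assms by auto
  have fin: "finite ?S" by simp
  have "max_occ A l h = Max ?S" unfolding max_occ_def using fin ne by (simp add: Max_insert max_def)
  then have ex: "\<exists>q. l \<le> q \<and> q < h \<and> occ A (A!q) l h = max_occ A l h"
    using Max_in[OF fin ne] by force
  show ?thesis using someI_ex[OF ex] unfolding mode_in_def by blast
qed

lemma block_len_ge_1: "1 \<le> block_len e n"
  by (simp add: block_len_def)

lemma num_blocks_le: "num_blocks e n \<le> n + 1"
proof -
  let ?t = "block_len e n"
  have "n \<le> n * ?t" using block_len_ge_1[of e n] by simp
  then have "n + ?t - 1 < ?t + n * ?t" using block_len_ge_1[of e n] by linarith
  then have "n + ?t - 1 < (n + 1) * ?t" by simp
  then have "(n + ?t - 1) div ?t < n + 1" by (rule less_mult_imp_div_less)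
  then show ?thesis by (simp add: num_blocks_def)
qed

context
  fixes e :: real and n :: nat
  assumes e: "0 \<le> e" "e \<le> 1/2" and n: "1 \<le> n"
begin

lemma powr_e_ge_1: "1 \<le> real n powr e"
  using n e by (simp add: ge_one_powr_ge_zero)

lemma block_len_ge: "real n powr e \<le> real (block_len e n)"
proof -
  have "real n powr e \<le> real (nat \<lceil>real n powr e\<rceil>)" by (rule real_nat_ceiling_ge)
  also have "\<dots> \<le> real (block_len e n)" unfolding block_len_def by simp
  finally show ?thesis .
qed

lemma block_len_le: "real (block_len e n) \<le> 2 * real n powr e"
proof -
  let ?p = "real n powr e"
  have c: "real_of_int \<lceil>?p\<rceil> \<le> ?p + 1" by (rule of_int_ceiling_le_add_one)
  have "real (nat \<lceil>?p\<rceil>) = real_of_int \<lceil>?p\<rceil>" using powr_e_ge_1 by simp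
  then have "real (nat \<lceil>?p\<rceil>) \<le> 2 * ?p" using c powr_e_ge_1 by linarith
  then show ?thesis using powr_e_ge_1 unfolding block_len_def by (cases "1 \<le> nat \<lceil>?p\<rceil>") (simp_all add: max_def)
qed

lemma block_len_le_n: "block_len e n \<le> n"
proof -
  have "real n powr e \<le> real n powr 1" using n e by (intro powr_mono) auto
  then have le_n: "real n powr e \<le> real n" using n by simp
  then have "\<lceil>real n powr e\<rceil> \<le> \<lceil>real n\<rceil>" by (rule ceiling_mono)
  then have "\<lceil>real n powr e\<rceil> \<le> int n" by simp
  then show ?thesis unfolding block_len_def using n le_n by simp
qed

lemma num_blocks_real: "real (num_blocks e n) \<le> 3 * real n powr (1 - e)"
proof -
  define t where "t = block_len e n"
  have t1: "1 \<le> t" using block_len_ge_1 t_def by simp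
  have tp: "real n powr e \<le> real t" using block_len_ge t_def by simp
  have "(n + t - 1) div t * t \<le> n + t - 1" by (rule div_times_less_eq_dividend)
  then have "real ((n + t - 1) div t) * real t \<le> real (n + t - 1)" by (metis of_nat_le_iff of_nat_mult)
  then have "real ((n + t - 1) div t) \<le> real (n + t - 1) / real t" using t1 by (simp add: pos_le_divide_eq)
  also have "\<dots> \<le> (real n + real t) / real t" using t1 by (intro divide_right_mono) auto
  also have "\<dots> = real n / real t + 1" using t1 by (simp add: field_simps)
  also have "real n / real t \<le> real n / real n powr e"
    using tp powr_e_ge_1 n by (intro divide_left_mono mult_pos_pos) auto
  also have "real n / real n powr e = real n powr (1 - e)" using n by (simp add: powr_diff)
  finally have "real ((n + t - 1) div t) \<le> real n powr (1 - e) + 1" by simp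
  moreover have "1 \<le> real n powr (1 - e)" using n e by (simp add: ge_one_powr_ge_zero)
  ultimately show ?thesis by (simp add: num_blocks_def t_def[symmetric])
qed

lemma space_bound: "real (rev_base e n + 4 * n) \<le> 37 * real n powr (2 - 2 * e)"
proof -
  have "real (num_blocks e n) * real (num_blocks e n) \<le> (3 * real n powr (1 - e)) * (3 * real n powr (1 - e))"
    using num_blocks_real by (intro mult_mono) auto
  also have "\<dots> = 9 * (real n powr (1 - e) * real n powr (1 - e))" by simp
  also have "real n powr (1 - e) * real n powr (1 - e) = real n powr (2 - 2 * e)"
    by (simp add: powr_add[symmetric])
  finally have W2: "real (num_blocks e n) * real (num_blocks e n) \<le> 9 * real n powr (2 - 2 * e)" .
  have "real n powr 1 \<le> real n powr (2 - 2 * e)" using n e by (intro powr_mono) auto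
  then have "real n \<le> real n powr (2 - 2 * e)" using n by simp
  moreover have "1 \<le> real n powr (2 - 2 * e)" using n e by (simp add: ge_one_powr_ge_zero)
  moreover have "real (rev_base e n + 4 * n) = 11 + 2 * (real (num_blocks e n) * real (num_blocks e n)) + 8 * real n"
    by (simp add: rev_base_def fwd_base_def)
  ultimately show ?thesis using W2 by linarith
qed

text \<open>A query runs in 59 + 64 t steps, which is O(n^e).\<close>
lemma time_bound: "real (59 + 64 * block_len e n) \<le> 187 * real n powr e"
  using block_len_le powr_e_ge_1 by simp

end


lemma nbits_gt: "x < 2 ^ nbits x"
  unfolding nbits_def by (rule LeastI[of _ x]) (simp add: less_exp)

lemma nbits_ge4: assumes "2 \<le> x" shows "4 \<le> (2::nat) ^ nbits x"
proof -
  have "\<not> nbits x \<le> 1"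
  proof
    assume "nbits x \<le> 1"
    then have "(2::nat) ^ nbits x \<le> 2 ^ 1" by (intro power_increasing) auto
    then show False using nbits_gt[of x] assms by simp
  qed
  then have "(2::nat) ^ 2 \<le> 2 ^ nbits x" by (intro power_increasing) auto
  then show ?thesis by simp
qed

lemma cube_bound:
  assumes "1 \<le> n" "1 \<le> u" "W \<le> n + 1" "n + u < X" "4 \<le> X"
  shows "u + 12 + 2 * (W * W) + 9 * n < (X::nat) ^ 3"
proof -
  obtain Y where Y: "X = Suc Y" using assms(5) by (cases X) auto
  have y3: "3 \<le> Y" and wy: "W \<le> Y" and nY: "n + 1 \<le> Y" "u \<le> Y" using assms Y by auto
  have "W * W \<le> Y * Y" using wy by (intro mult_le_mono) auto
  moreover have "3 * (Y * Y) \<le> Y * Y * Y" "3 * Y \<le> Y * Y" using y3 by simp_all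
  moreover have "X ^ 3 = Y * Y * Y + 3 * (Y * Y) + 3 * Y + 1" by (simp add: Y power3_eq_cube algebra_simps)
  ultimately show ?thesis using nY by linarith
qed

text \<open>With w = 3 * nbits (n + u), all addresses of the image and all intermediate values
  of the program fit into a word.\<close>
lemma word_bound:
  assumes "1 \<le> n" "1 \<le> u"
  shows "u + fwd_base e n + 9 * n < 2 ^ wordsize n u"
proof -
  have "(2::nat) ^ wordsize n u = (2 ^ nbits (n + u)) ^ 3"
    by (simp add: wordsize_def power_mult[symmetric] mult.commute)
  moreover have "n + u < 2 ^ nbits (n + u)" by (rule nbits_gt)
  moreover have "4 \<le> (2::nat) ^ nbits (n + u)" using assms by (intro nbits_ge4) simp
  ultimately have "u + 12 + 2 * (num_blocks e n * num_blocks e n) + 9 * n < 2 ^ wordsize n u"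
    using cube_bound[OF assms num_blocks_le] by presburger
  then show ?thesis by (simp add: fwd_base_def)
qed

lemma universe_pos:
  fixes A :: "nat list"
  assumes "1 \<le> length A" "set A \<subseteq> {..<u}" shows "1 \<le> u"
proof -
  have "A ! 0 \<in> set A" using assms by (intro nth_mem) linarith
  then have "A ! 0 < u" using assms(2) by auto
  then show ?thesis by linarith
qed

lemma scan_arrays_le:
  assumes "set B \<subseteq> {..<u}"
  shows "scan_arrays B b d \<le> u + b + 4 * length B"
proof -
  have val: "B ! k < u" if "k < length B" for k using assms nth_mem[OF that] by blast
  consider "d < length B" | "length B \<le> d" "d < 2 * length B" | "2 * length B \<le> d" "d < 3 * length B"
    | "3 * length B \<le> d" "d < 4 * length B" | "4 * length B \<le> d" by linarith
  then show ?thesis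
  proof cases
    case 1 then show ?thesis
      using sorted_pos_less[of d B] class_end_le[of B d] by (simp add: scan_arrays_def)
  next
    case 2 then show ?thesis using class_end_le[of B "d - length B"] by (simp add: scan_arrays_def)
  next
    case 3
    then have "d - 2 * length B < length B" by linarith
    then show ?thesis using 3 val[of "d - 2 * length B"] by (simp add: scan_arrays_def)
  next
    case 4
    then have "0 < length B" by linarith
    then show ?thesis using 4 sorted_at_less[of B "d - 3 * length B"] by (simp add: scan_arrays_def)
  next
    case 5 then show ?thesis by (simp add: scan_arrays_def)
  qed
qed

lemma table_entries_le:
  assumes A: "set A \<subseteq> {..<u}"
  shows "table_mode e A x y \<le> u" "table_freq e A x y \<le> length A"
proof -
  show "table_mode e A x y \<le> u"
  proof (cases "x * block_len e (length A) < min (y * block_len e (length A)) (length A)")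
    case True
    then obtain q where q: "q < length A" "table_mode e A x y = A!q"
      using mode_in_spec[OF True, of A] by (auto simp: table_mode_def)
    have "A!q < u" using A nth_mem[OF q(1)] by blast
    then show ?thesis using q(2) by simp
  next
    case False
    then show ?thesis unfolding table_mode_def by (simp only: if_False)
  qed
  show "table_freq e A x y \<le> length A"
    unfolding table_freq_def
    using max_occ_le[of A "x * block_len e (length A)" "min (y * block_len e (length A)) (length A)"]
    by simp
qed

lemma encode_le:
  assumes e: "0 \<le> e" "e \<le> 1/2" and A: "1 \<le> length A" "set A \<subseteq> {..<u}"
  shows "encode e A a \<le> u + rev_base e (length A) + 4 * length A"
proof -
  define n where "n = length A"
  define W where "W = num_blocks e n"
  let ?bd = "u + rev_base e n + 4 * n"
  let ?hdr = "[block_len e n, W, n, 11, 11 + W * W, fwd_base e n, fwd_base e n + n,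
               fwd_base e n + 2 * n, rev_base e n, rev_base e n + n, rev_base e n + 2 * n]"
  have n1: "1 \<le> n" using A n_def by simp
  have bases: "rev_base e n = fwd_base e n + 4 * n" "fwd_base e n = 11 + 2 * (W * W)"
    by (simp_all add: rev_base_def fwd_base_def W_def)
  have "block_len e n \<le> n" using block_len_le_n[OF e n1] .
  moreover have "W \<le> W * W" by (cases W) auto
  ultimately have hdr: "\<forall>x\<in>set ?hdr. x \<le> ?bd"
    unfolding list.set ball_simps using bases by (intro conjI TrueI; linarith)
  have tmode: "table_mode e A x y \<le> ?bd" for x y
    using table_entries_le(1)[OF A(2)] by (rule le_trans) simp
  have tfreq: "table_freq e A x y \<le> ?bd" for x y
    using table_entries_le(2)[OF A(2)] by (rule le_trans) (simp add: n_def)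
  have fwd: "scan_arrays A (fwd_base e n) d \<le> ?bd" for d
  proof -
    have "scan_arrays A (fwd_base e n) d \<le> u + fwd_base e n + 4 * n"
      using scan_arrays_le[OF A(2)] n_def by simp
    then show ?thesis using bases by simp
  qed
  have rev: "scan_arrays (rev A) (rev_base e n) d \<le> ?bd" for d
    using scan_arrays_le[of "rev A" u] A(2) n_def by simp
  consider "a < 11" | "\<not> a < 11" "a < 11 + W * W" | "\<not> a < 11 + W * W" "a < 11 + 2 * (W * W)"
    | "\<not> a < 11 + 2 * (W * W)" "a < rev_base e n" | "\<not> a < rev_base e n" by linarith
  moreover have E: "encode e A a = (if a < 11 then ?hdr ! a
     else if a < 11 + W * W then table_mode e A ((a - 11) div W) ((a - 11) mod W)
     else if a < 11 + 2 * (W * W) then table_freq e A ((a - 11 - W * W) div W) ((a - 11 - W * W) mod W)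
     else if a < rev_base e n then scan_arrays A (fwd_base e n) (a - fwd_base e n)
     else if a < rev_base e n + 4 * n then scan_arrays (rev A) (rev_base e n) (a - rev_base e n) else 0)"
    unfolding encode_def Let_def n_def W_def ..
  ultimately have "encode e A a \<le> ?bd"
  proof cases
    case 1
    have "?hdr ! a \<in> set ?hdr" by (rule nth_mem) (use 1 in simp)
    then have "?hdr ! a \<le> ?bd" by (rule bspec[OF hdr])
    then show ?thesis using E 1 by simp
  next
    case 2 then show ?thesis using E tmode by simp
  next
    case 3 then show ?thesis using E tfreq by simp
  next
    case 4 then show ?thesis using E fwd by simp
  next
    case 5 then show ?thesis using E rev bases by simp
  qed
  then show ?thesis by (simp add: n_def)
qed

lemma encode_fits_word:
  assumes e: "0 \<le> e" "e \<le> 1/2" and A: "1 \<le> length A" "set A \<subseteq> {..<u}"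
  shows "encode e A a < 2 ^ wordsize (length A) u"
  using encode_le[OF e A, of a] word_bound[OF A(1) universe_pos[OF A], of e] A(1)
  by (simp add: rev_base_def)

lemma encode_space:
  assumes e: "0 \<le> e" "e \<le> 1/2" and A: "1 \<le> length A" "set A \<subseteq> {..<u}"
  shows "\<exists>S::nat. real S \<le> 200 * real (length A) powr (2 - 2 * e) \<and>
                    (\<forall>a \<ge> S. encode e A a = 0) \<and> (\<forall>a. encode e A a < 2 ^ wordsize (length A) u)"
proof (intro exI[of _ "rev_base e (length A) + 4 * length A"] conjI allI impI)
  show "real (rev_base e (length A) + 4 * length A) \<le> 200 * real (length A) powr (2 - 2 * e)"
    using space_bound[OF e A(1)] by simp
  show "encode e A a = 0" if "rev_base e (length A) + 4 * length A \<le> a" for a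
    using encode_zero that by blast
  show "encode e A a < 2 ^ wordsize (length A) u" for a
    by (rule encode_fits_word[OF e A])
qed


section \<open>Answering a query\<close>

lemma query_blocks:
  fixes t n lo j :: nat
  assumes t: "1 \<le> t" and r: "lo < j" "j \<le> n"
    and bL: "bL = (lo + t - 1) div t" and bR: "bR = j div t"
    and pe: "pe = (if bL * t < j then bL * t else j)" and se: "se = (if bR * t < pe then pe else bR * t)"
  shows "lo \<le> bL * t" "bL * t \<le> lo + t - 1" "bR * t \<le> j"
    "lo \<le> pe" "pe \<le> se" "se \<le> j" "pe - lo < t" "j - se < t"
    "bL < (n + t - 1) div t + 1" "bR < (n + t - 1) div t + 1"
proof -
  have "(lo + t - 1) div t * t + (lo + t - 1) mod t = lo + t - 1" by simp
  moreover have "(lo + t - 1) mod t < t" using t by simp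
  ultimately show a_lo: "lo \<le> bL * t" unfolding bL using t by linarith
  show a_hi: "bL * t \<le> lo + t - 1" unfolding bL by (rule div_times_less_eq_dividend)
  show b_hi: "bR * t \<le> j" unfolding bR by (rule div_times_less_eq_dividend)
  have "j div t * t + j mod t = j" by simp
  moreover have "j mod t < t" using t by simp
  ultimately have b_lo: "j < bR * t + t" unfolding bR by linarith
  have "bR < bL \<Longrightarrow> bR * t + t \<le> bL * t"
    using mult_le_mono1[of "Suc bR" bL t] by simp
  show "lo \<le> pe" "pe \<le> se" "se \<le> j" "pe - lo < t" "j - se < t"
    using a_lo a_hi b_hi b_lo \<open>bR < bL \<Longrightarrow> bR * t + t \<le> bL * t\<close> r t unfolding pe se by auto
  have "bL \<le> (n + t - 1) div t" unfolding bL using r by (intro div_le_mono) linarith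
  then show "bL < (n + t - 1) div t + 1" by linarith
  have "bR \<le> (n + t - 1) div t" unfolding bR using r t by (intro div_le_mono) linarith
  then show "bR < (n + t - 1) div t + 1" by linarith
qed

lemma initial_candidate:
  assumes "lo \<le> a" "b \<le> hi" and pe: "pe = (if a < hi then a else hi)" and se: "se = (if b < pe then pe else b)"
  shows "cand_inv A lo hi pe se {} (if a < b then mode_in A a b else 0, max_occ A a b)"
proof (cases "a < b")
  case True
  then have span: "pe = a" "se = b" using assms by auto
  obtain q where q: "a \<le> q" "q < b" "mode_in A a b = A!q" "occ A (A!q) a b = max_occ A a b"
    using mode_in_spec[OF True, of A] by blast
  have "occ A (A!q) a b \<le> occ A (A!q) lo hi" using assms by (intro occ_sub) auto
  then show ?thesis unfolding cand_inv_def using span q True max_occ_ge[of A _ a b] by simp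
next
  case False
  then have "se = pe" using assms by (auto simp: pe se)
  then show ?thesis unfolding cand_inv_def using False max_occ_empty[of b a A] by (simp add: occ_empty)
qed

lemma prefix_phase_run:
  fixes A :: "nat list" and e :: real
  assumes defs: "n = length A" "M = encode e A" "b1 = fwd_base e n"
    and entry: "at_loop_entry M [c0, j, lo, pe, j, f0, b1, b1 + n, b1 + 2 * n, 1, lo, n, se, 0, 0] s"
    and ord: "lo \<le> pe" "pe \<le> se" "se \<le> j" "lo < j" "j \<le> n" and f0: "f0 \<le> n"
    and word: "b1 + 9 * n < 2 ^ w" "\<And>a. M a < 2 ^ w" "0 < w"
  defines "F1 \<equiv> foldl (scan_step A j) (c0, f0) [lo..<pe]"
  shows "\<exists>t1. t1 \<le> 16 * ((pe - lo) + (snd F1 - f0)) + 14 \<and>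
     at_loop M (regs (run w mode_program t1 s)) (n - j) (snd F1) (fst F1) (run w mode_program t1 s) \<and>
     loop_tables w (rev A) M (regs (run w mode_program t1 s)) (rev_base e n + 3 * n) \<and>
     regs (run w mode_program t1 s) 3 = n - se \<and> regs (run w mode_program t1 s) 4 = n - lo \<and>
     regs (run w mode_program t1 s) 26 = 1"
proof -
  define b2 where "b2 = rev_base e n"
  have b2: "b2 = b1 + 4 * n" by (simp add: b2_def defs rev_base_def)
  have P1: "pc s = 42" "mem s = M" "regs s 0 = c0" "regs s 1 = j" "regs s 2 = lo" "regs s 3 = pe"
    "regs s 4 = j" "regs s 5 = f0" "regs s 6 = b1" "regs s 7 = b1 + n" "regs s 8 = b1 + 2 * n"
    "regs s 12 = 1" "regs s 13 = lo" "regs s 17 = n" "regs s 25 = se" "regs s 26 = 0" "regs s 30 = 0"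
    using entry by (simp_all add: at_loop_entry_def)
  define R1 where "R1 = regs s"
  have L1: "at_loop M R1 lo f0 c0 s" unfolding at_loop_def R1_def using P1 by simp
  have D1: "loop_tables w A M R1 (b1 + 3 * n)"
    unfolding loop_tables_def R1_def using P1 encode_fwd[of _ A e] word ord
    by (simp add: defs)
  obtain t1 where t1: "t1 \<le> 16 * ((pe - lo) + (snd F1 - f0)) + 2"
    "at_exit M R1 (snd F1) (fst F1) (run w mode_program t1 s)"
    using loop_run[OF D1 L1] f0 P1 by (auto simp: R1_def F1_def defs(1))
  define s2 where "s2 = run w mode_program t1 s"
  have P2: "pc s2 = 60" "mem s2 = M" "regs s2 26 = 0" "regs s2 17 = n" "regs s2 1 = j"
    "regs s2 25 = se" "regs s2 13 = lo" "regs s2 12 = 1" "regs s2 30 = 0"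
    using t1(2) P1 unfolding at_exit_def s2_def[symmetric] R1_def by auto
  define s3 where "s3 = run w mode_program 12 s2"
  have hdr: "M 8 = b2" "M 9 = b2 + n" "M 10 = b2 + 2 * n"
    using encode_header[of e A] by (simp_all add: defs b2_def)
  have "11 \<le> b1" by (simp add: defs fwd_base_def)
  then have "b2 < 2^w" "b2 + n < 2^w" "b2 + 2 * n < 2^w" "(16::nat) < 2^w"
    using word(1) b2 ord by linarith+
  note switch = switch_to_suffix[OF P2 hdr this word(3)]
  have P3: "pc s3 = 42" "mem s3 = M" "regs s3 0 = fst F1" "regs s3 5 = snd F1" "regs s3 2 = n - j"
    "regs s3 3 = n - se" "regs s3 4 = n - lo" "regs s3 6 = b2" "regs s3 7 = b2 + n"
    "regs s3 8 = b2 + 2 * n" "regs s3 12 = 1" "regs s3 26 = 1"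
    using switch t1(2) unfolding s3_def at_exit_def s2_def[symmetric] by auto
  have "at_loop M (regs s3) (n - j) (snd F1) (fst F1) s3" unfolding at_loop_def using P3 by simp
  moreover have "loop_tables w (rev A) M (regs s3) (b2 + 3 * n)"
    unfolding loop_tables_def using P3 encode_rev[of _ A e] word ord b2
    by (simp add: defs b2_def)
  moreover have "s3 = run w mode_program (t1 + 12) s" by (simp only: run_add s3_def s2_def)
  ultimately show ?thesis using t1(1) P3 by (intro exI[of _ "t1 + 12"]) (simp add: b2_def)
qed

lemma scans_run:
  fixes A :: "nat list" and e :: real
  assumes defs: "n = length A" "M = encode e A" "b1 = fwd_base e n"
    and entry: "at_loop_entry M [c0, j, lo, pe, j, f0, b1, b1 + n, b1 + 2 * n, 1, lo, n, se, 0, 0] s"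
    and ord: "lo \<le> pe" "pe \<le> se" "se \<le> j" "lo < j" "j \<le> n" and f0: "f0 \<le> n"
    and word: "b1 + 9 * n < 2 ^ w" "\<And>a. M a < 2 ^ w" "0 < w"
  defines "F2 \<equiv> foldl (scan_step (rev A) (n - lo)) (foldl (scan_step A j) (c0, f0) [lo..<pe])
                  [n - j..<n - se]"
  shows "\<exists>T. T \<le> 16 * ((pe - lo) + (j - se) + (snd F2 - f0)) + 17 \<and>
             halted mode_program (run w mode_program T s) \<and> regs (run w mode_program T s) 0 = fst F2"
proof -
  define F1 where "F1 = foldl (scan_step A j) (c0, f0) [lo..<pe]"
  obtain t1 where t1: "t1 \<le> 16 * ((pe - lo) + (snd F1 - f0)) + 14"
      and L2: "at_loop M (regs (run w mode_program t1 s)) (n - j) (snd F1) (fst F1) (run w mode_program t1 s)"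
      and D2: "loop_tables w (rev A) M (regs (run w mode_program t1 s)) (rev_base e n + 3 * n)"
      and R2: "regs (run w mode_program t1 s) 3 = n - se" "regs (run w mode_program t1 s) 4 = n - lo"
        "regs (run w mode_program t1 s) 26 = 1"
    using prefix_phase_run[OF defs entry ord f0 word] unfolding F1_def by blast
  define s3 where "s3 = run w mode_program t1 s"
  have f1: "snd F1 \<le> length (rev A)" using scan_bounded[of j A "(c0, f0)"] ord f0 by (simp add: F1_def defs(1))
  obtain t2 where t2: "t2 \<le> 16 * ((n - se - (n - j)) + (snd F2 - snd F1)) + 2"
    "at_exit M (regs s3) (snd F2) (fst F2) (run w mode_program t2 s3)"
    using loop_run[OF D2[folded s3_def] L2[folded s3_def] f1] R2 by (auto simp: s3_def F2_def F1_def)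
  define s4 where "s4 = run w mode_program t2 s3"
  have "pc s4 = 60" "regs s4 26 = 1" "regs s4 0 = fst F2"
    using t2(2) R2 unfolding at_exit_def s4_def[symmetric] s3_def[symmetric] by auto
  then have final: "halted mode_program (run w mode_program 1 s4)" "regs (run w mode_program 1 s4) 0 = fst F2"
    using halt_after_suffix by auto
  have "run w mode_program (t1 + t2 + 1) s = run w mode_program 1 s4"
    by (simp only: run_add s3_def s4_def)
  moreover have "t1 + t2 + 1 \<le> 16 * ((pe - lo) + (j - se) + (snd F2 - f0)) + 17"
  proof -
    have "f0 \<le> snd F1" "snd F1 \<le> snd F2"
      using scan_mono[of "(c0, f0)"] scan_mono[of F1] by (simp_all add: F1_def F2_def)
    then have split: "snd F2 - f0 = (snd F1 - f0) + (snd F2 - snd F1)" by simp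
    have suffix_len: "n - se - (n - j) = j - se" using ord by simp
    define p where "p = pe - lo"
    define q where "q = j - se"
    define d1 where "d1 = snd F1 - f0"
    define d2 where "d2 = snd F2 - snd F1"
    have "snd F2 - f0 = d1 + d2" "t1 \<le> 16 * p + 16 * d1 + 14" "t2 \<le> 16 * q + 16 * d2 + 2"
      using split suffix_len t1 t2(1) by (simp_all add: p_def q_def d1_def d2_def)
    then show ?thesis unfolding p_def[symmetric] q_def[symmetric] by (simp only: distrib_left)
  qed
  ultimately show ?thesis using final by (intro exI[of _ "t1 + t2 + 1"]) simp
qed


lemma query_prelude:
  assumes e: "0 \<le> e" "e \<le> 1/2" and A: "1 \<le> length A" "set A \<subseteq> {..<u}"
    and ij: "1 \<le> i" "i \<le> j" "j \<le> length A"
  obtains lo pe se c0 f0 N0 where "lo = i - 1" "lo \<le> pe" "pe \<le> se" "se \<le> j"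
    "pe - lo < block_len e (length A)" "j - se < block_len e (length A)"
    "f0 \<le> length A" "cand_inv A lo j pe se {} (c0, f0)" "N0 \<le> 42"
    "at_loop_entry (encode e A)
       [c0, j, lo, pe, j, f0, fwd_base e (length A), fwd_base e (length A) + length A,
        fwd_base e (length A) + 2 * length A, 1, lo, length A, se, 0, 0]
       (run (wordsize (length A) u) mode_program N0 (query_init (encode e A) i j))"
proof -
  define n where "n = length A"
  define w where "w = wordsize n u"
  define M where "M = encode e A"
  define t where "t = block_len e n"
  define W where "W = num_blocks e n"
  define b1 where "b1 = fwd_base e n"
  define lo where "lo = i - 1"
  define bL where "bL = (lo + t - 1) div t"
  define bR where "bR = j div t"
  define pe where "pe = (if bL * t < j then bL * t else j)"
  define se where "se = (if bR * t < pe then pe else bR * t)"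
  define idx where "idx = bL * W + bR"
  have n1: "1 \<le> n" using A n_def by simp
  have t1: "1 \<le> t" using block_len_ge_1 t_def by simp
  have tn: "t \<le> n" using block_len_le_n[OF e n1] t_def by simp
  have lohi: "lo < j" "j \<le> n" using ij by (simp_all add: lo_def n_def)
  have W: "W = (n + t - 1) div t + 1" by (simp add: W_def num_blocks_def t_def)
  note blocks = query_blocks[OF t1 lohi bL_def bR_def pe_def se_def, folded W]
  have ord: "lo \<le> pe" "pe \<le> se" "se \<le> j" "pe - lo < t" "j - se < t" using blocks(4-8) .
  have wb: "u + b1 + 9 * n < 2 ^ w"
    using word_bound[OF n1 universe_pos[OF A]] by (simp add: w_def b1_def)
  have Mlt: "M a < 2 ^ w" for a
    using encode_fits_word[OF e A] by (simp add: M_def w_def n_def)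
  have w0: "0 < w" using wb n1 by (cases w) auto
  have "idx < W * W" unfolding idx_def using pair_index_less blocks(9,10) .
  moreover have "W \<le> W * W" by (cases W) auto
  moreover have "b1 = 11 + 2 * (W * W)" by (simp add: b1_def fwd_base_def W_def)
  moreover have "bL * t \<le> 2 * n" "bL * W \<le> idx" using blocks(2) tn lohi by (auto simp: idx_def)
  ultimately have words: "(8::nat) < 2^w" "j < 2^w" "lo + t < 2^w" "bL * t < 2^w" "bR * t < 2^w"
    "bL * W < 2^w" "idx < 2^w" "11 + idx < 2^w" "11 + W * W + idx < 2^w" "W < 2^w" "n < 2^w"
    "b1 < 2^w" "b1 + n < 2^w" "b1 + 2 * n < 2^w"
    using wb tn lohi blocks(3) by linarith+
  have hdr: "M 0 = t" "M 1 = W" "M 2 = n" "M 3 = 11" "M 4 = 11 + W * W" "M 5 = b1"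
    "M 6 = b1 + n" "M 7 = b1 + 2 * n"
    using encode_header[of e A] by (simp_all add: M_def t_def W_def n_def b1_def)
  define c0 where "c0 = M (11 + idx)"
  define f0 where "f0 = M (11 + W * W + idx)"
  obtain N0 where N0: "N0 \<le> 42"
    "at_loop_entry M [c0, j, lo, pe, j, f0, b1, b1 + n, b1 + 2 * n, 1, lo, n, se, 0, 0]
       (run w mode_program N0 (query_init M i j))"
    using prelude_run[OF hdr Mlt words(10-14) lo_def[symmetric] refl refl bL_def[symmetric]
        bR_def[symmetric] refl refl refl idx_def[symmetric] refl refl words(1-9) w0]
    unfolding pe_def se_def c0_def f0_def by blast
  have span: "min (bR * t) n = bR * t" using blocks(3) lohi by simp
  have c0: "c0 = (if bL * t < bR * t then mode_in A (bL * t) (bR * t) else 0)"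
    and f0: "f0 = max_occ A (bL * t) (bR * t)"
  proof -
    have tab: "M (11 + idx) = table_mode e A bL bR" "M (11 + W * W + idx) = table_freq e A bL bR"
      using encode_tables[of bL e A bR] blocks(9,10) by (simp_all add: M_def idx_def W_def n_def)
    show "c0 = (if bL * t < bR * t then mode_in A (bL * t) (bR * t) else 0)"
      unfolding c0_def tab(1) table_mode_def by (simp only: n_def[symmetric] t_def[symmetric] span)
    show "f0 = max_occ A (bL * t) (bR * t)"
      unfolding f0_def tab(2) table_freq_def by (simp only: n_def[symmetric] t_def[symmetric] span)
  qed
  have init: "cand_inv A lo j pe se {} (c0, f0)"
    unfolding c0 f0 by (rule initial_candidate) (use blocks(1,3) in \<open>simp_all add: pe_def se_def\<close>)
  have "f0 \<le> n" using max_occ_le[of A "bL * t" "bR * t"] f0 blocks(3) lohi by linarith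
  from that[OF lo_def ord(1-3) ord(4,5)[unfolded t_def n_def] this[unfolded n_def] init N0(1)
      N0(2)[unfolded M_def b1_def n_def w_def]]
  show thesis .
qed

lemma query_correct:
  assumes e: "0 \<le> e" "e \<le> 1/2" and A: "1 \<le> length A" "set A \<subseteq> {..<u}"
    and ij: "1 \<le> i" "i \<le> j" "j \<le> length A"
  shows "\<exists>T. real T \<le> 200 * real (length A) powr e \<and>
     halted mode_program (run (wordsize (length A) u) mode_program T (query_init (encode e A) i j)) \<and>
     is_mode (subarray A i j) (regs (run (wordsize (length A) u) mode_program T (query_init (encode e A) i j)) 0)"
proof -
  define n where "n = length A"
  define w where "w = wordsize n u"
  define M where "M = encode e A"
  obtain lo pe se c0 f0 N0 where lo: "lo = i - 1" and ord: "lo \<le> pe" "pe \<le> se" "se \<le> j"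
    and short: "pe - lo < block_len e n" "j - se < block_len e n"
    and f0: "f0 \<le> n" and init: "cand_inv A lo j pe se {} (c0, f0)" and N0: "N0 \<le> 42"
    and entry: "at_loop_entry M [c0, j, lo, pe, j, f0, fwd_base e n, fwd_base e n + n,
                  fwd_base e n + 2 * n, 1, lo, n, se, 0, 0] (run w mode_program N0 (query_init M i j))"
    by (rule query_prelude[OF e A ij, folded n_def, folded w_def M_def])
  have lohi: "lo < j" "j \<le> n" using ij lo by (simp_all add: n_def)
  have wb: "fwd_base e n + 9 * n < 2 ^ w"
    using word_bound[OF A(1) universe_pos[OF A], of e] by (simp add: w_def n_def)
  have w0: "0 < w" using wb A(1) n_def by (cases w) auto
  define F where "F = foldl (scan_step (rev A) (n - lo)) (foldl (scan_step A j) (c0, f0) [lo..<pe])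
                        [n - j..<n - se]"
  define s1 where "s1 = run w mode_program N0 (query_init M i j)"
  have Mlt: "M a < 2 ^ w" for a using encode_fits_word[OF e A] by (simp add: M_def w_def n_def)
  have "\<exists>T. T \<le> 16 * ((pe - lo) + (j - se) + (snd F - f0)) + 17 \<and>
          halted mode_program (run w mode_program T s1) \<and> regs (run w mode_program T s1) 0 = fst F"
    unfolding F_def by (rule scans_run[OF n_def M_def refl entry[folded s1_def] ord lohi f0 wb Mlt w0])
  then obtain T where T: "T \<le> 16 * ((pe - lo) + (j - se) + (snd F - f0)) + 17"
    "halted mode_program (run w mode_program T s1)" "regs (run w mode_program T s1) 0 = fst F"
    by blast
  have run: "run w mode_program (N0 + T) (query_init M i j) = run w mode_program T s1"
    by (simp add: run_add s1_def)
  have "is_mode (mset (map (nth A) [lo..<j])) (fst F)" "snd F \<le> (pe - lo) + f0 + (j - se)"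
    using two_phase_scan[OF init ord lohi(1) lohi(2)[unfolded n_def]]
    by (simp_all add: F_def n_def)
  then have mode: "is_mode (subarray A i j) (fst F)" and "snd F - f0 \<le> (pe - lo) + (j - se)"
    using subarray_eq[OF ij(1), of j A] ij(3) by (simp_all add: lo)
  moreover have "T \<le> 16 * (pe - lo) + 16 * (j - se) + 16 * (snd F - f0) + 17"
    using T(1) by (simp add: algebra_simps)
  ultimately have "N0 + T \<le> 59 + 64 * block_len e n" using N0 short by linarith
  then have "real (N0 + T) \<le> 200 * real n powr e"
    using time_bound[OF e A(1)] by (simp add: n_def)
  then show ?thesis using T(2,3) run mode
    by (intro exI[of _ "N0 + T"]) (simp add: w_def M_def n_def)
qed


theorem theorem1:
  fixes \<epsilon> :: real
  assumes "0 \<le> \<epsilon>" and "\<epsilon> \<le> 1/2"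
  shows "\<exists>(C::real) (P::instr list) (enc :: nat \<Rightarrow> nat list \<Rightarrow> nat \<Rightarrow> nat).
     \<forall>(u::nat) (A::nat list).
       length A \<ge> 1 \<and> set A \<subseteq> {..<u} \<longrightarrow>
       (let n = length A; w = wordsize n u; M = enc u A in
          (\<exists>S::nat. real S \<le> C * real n powr (2 - 2 * \<epsilon>) \<and>
                    (\<forall>a \<ge> S. M a = 0) \<and> (\<forall>a. M a < 2 ^ w)) \<and>
          (\<forall>i j. 1 \<le> i \<and> i \<le> j \<and> j \<le> n \<longrightarrow>
             (\<exists>t::nat. real t \<le> C * real n powr \<epsilon> \<and>
                halted P (run w P t (query_init M i j)) \<and>
                is_mode (subarray A i j) (regs (run w P t (query_init M i j)) 0))))"
proof (intro exI[of _ 200] exI[of _ mode_program] exI[of _ "\<lambda>u A. encode \<epsilon> A"] allI impI,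
       unfold Let_def, elim conjE)
  fix u :: nat and A :: "nat list"
  assume "1 \<le> length A" "set A \<subseteq> {..<u}"
  note setting = assms this
  show "(\<exists>S::nat. real S \<le> 200 * real (length A) powr (2 - 2 * \<epsilon>) \<and>
            (\<forall>a \<ge> S. encode \<epsilon> A a = 0) \<and> (\<forall>a. encode \<epsilon> A a < 2 ^ wordsize (length A) u)) \<and>
        (\<forall>i j. 1 \<le> i \<and> i \<le> j \<and> j \<le> length A \<longrightarrow>
           (\<exists>t::nat. real t \<le> 200 * real (length A) powr \<epsilon> \<and>
              halted mode_program (run (wordsize (length A) u) mode_program t (query_init (encode \<epsilon> A) i j)) \<and>
              is_mode (subarray A i j)
                (regs (run (wordsize (length A) u) mode_program t (query_init (encode \<epsilon> A) i j)) 0)))"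
    using encode_space[OF setting] query_correct[OF setting] by blast
qed

end
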